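(* For integers $k\ge 1$ and $l\ge 2$, as $n\to\infty$, $$ex(n,P_l,C_{2k+1})=(1+o(1))\left(\frac n2\right)^l.$$
   Context: $C_k$ denotes the cycle with $k$ vertices and $P_l$ the path with $l$ vertices. $ex(n,H,F)$ is the maximum number of subgraphs isomorphic to $H$ in an $n$-vertex graph containing no subgraph isomorphic to $F$. *)

theory Defs
  imports Complex_Main "HOL-Library.Landau_Symbols"
begin

definition simple_graph :: "'a set \<Rightarrow> 'a set set \<Rightarrow> bool" where
  "simple_graph V E \<longleftrightarrow> finite V \<and>
     (\<forall>e\<in>E. \<exists>x y. x \<noteq> y \<and> e = {x, y} \<and> x \<in> V \<and> y \<in> V)"

definition graph_iso :: "'a set \<Rightarrow> 'a set set \<Rightarrow> 'b set \<Rightarrow> 'b set set \<Rightarrow> bool" where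
  "graph_iso V1 E1 V2 E2 \<longleftrightarrow> (\<exists>f. bij_betw f V1 V2 \<and>
     (\<forall>x\<in>V1. \<forall>y\<in>V1. {x, y} \<in> E1 \<longleftrightarrow> {f x, f y} \<in> E2))"

definition copies :: "'b set \<Rightarrow> 'b set set \<Rightarrow> 'a set \<Rightarrow> 'a set set \<Rightarrow> ('a set \<times> 'a set set) set" where
  "copies VH EH V E = {(V', E'). V' \<subseteq> V \<and> E' \<subseteq> E \<and> (\<forall>e\<in>E'. e \<subseteq> V') \<and>
       graph_iso VH EH V' E'}"

definition count_copies :: "'b set \<Rightarrow> 'b set set \<Rightarrow> 'a set \<Rightarrow> 'a set set \<Rightarrow> nat" where
  "count_copies VH EH V E = card (copies VH EH V E)"

definition H_free :: "'b set \<Rightarrow> 'b set set \<Rightarrow> 'a set \<Rightarrow> 'a set set \<Rightarrow> bool" where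
  "H_free VF EF V E \<longleftrightarrow> copies VF EF V E = {}"

definition gen_ex :: "nat \<Rightarrow> 'b set \<times> 'b set set \<Rightarrow> 'c set \<times> 'c set set \<Rightarrow> nat" where
  "gen_ex n H F = Max {count_copies (fst H) (snd H) {0..<n} E | E.
       simple_graph {0..<n} E \<and> H_free (fst F) (snd F) {0..<n} E}"

definition path_graph :: "nat \<Rightarrow> nat set \<times> nat set set" where
  "path_graph l = ({0..<l}, {{i, Suc i} | i. Suc i < l})"

definition cycle_graph :: "nat \<Rightarrow> nat set \<times> nat set set" where
  "cycle_graph k = ({0..<k}, {{i, (Suc i) mod k} | i. i < k})"

end

theory Submission
  imports Defs
begin

text \<open>
  The lower bound comes from the complete bipartite graph between the even and the odd vertices:
  it has no odd cycle and minimum degree \<open>\<lfloor>n/2\<rfloor>\<close>, so it contains about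
  \<open>n (n/2)^(l-1)\<close> paths on \<open>l\<close> vertices listed in order, that is about \<open>(n/2)^l\<close> copies of \<open>P\<^sub>l\<close>.

  For the upper bound let \<open>G\<close> be \<open>C\<^bsub>2k+1\<^esub>\<close>-free. The neighbourhood of a vertex contains no path on
  \<open>2k\<close> vertices, so by an Erdos-Gallai type argument the codegrees of the edges at any vertex sum
  to at most \<open>2(2k-1)n\<close>; hence at most \<open>2(2k-1)n\<^sup>2/\<tau>\<close> ordered edges are heavy, i.e. have
  codegree at least \<open>\<tau>\<close>. A path avoiding heavy edges is a walk in the graph of light edges, in
  which \<open>d(x) + d(y) \<le> n + \<tau>\<close> along every edge, and such a graph has at most
  \<open>n ((n + \<tau>)/2)^m\<close> walks of length \<open>m\<close>. Taking \<open>\<tau> = \<surd>n\<close> gives at most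
  \<open>(2 + o(1)) (n/2)^l\<close> ordered paths, i.e. \<open>(1 + o(1)) (n/2)^l\<close> copies of \<open>P\<^sub>l\<close>.
\<close>

section \<open>Paths as lists of vertices\<close>

definition edge_chain :: "'a set set \<Rightarrow> 'a list \<Rightarrow> bool" where
  "edge_chain E xs \<longleftrightarrow> (\<forall>i. Suc i < length xs \<longrightarrow> {xs ! i, xs ! Suc i} \<in> E)"

definition path_lists :: "'a set \<Rightarrow> 'a set set \<Rightarrow> nat \<Rightarrow> 'a list set" where
  "path_lists V E l = {xs. length xs = l \<and> distinct xs \<and> set xs \<subseteq> V \<and> edge_chain E xs}"

definition path_edges :: "'a list \<Rightarrow> 'a set set" where
  "path_edges xs = {{xs ! i, xs ! Suc i} | i. Suc i < length xs}"

definition neighbours :: "'a set \<Rightarrow> 'a set set \<Rightarrow> 'a \<Rightarrow> 'a set" where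
  "neighbours V E v = {u \<in> V. {v, u} \<in> E}"

lemma simple_graph_edgeD:
  assumes "simple_graph V E" "{x, y} \<in> E"
  shows "x \<noteq> y" "x \<in> V" "y \<in> V"
  using assms unfolding simple_graph_def by (fastforce simp: doubleton_eq_iff)+

lemma not_in_neighbours_self: "simple_graph V E \<Longrightarrow> v \<notin> neighbours V E v"
  using simple_graph_edgeD(1) unfolding neighbours_def by fastforce

lemma finite_neighbours: "finite V \<Longrightarrow> finite (neighbours V E v)"
  unfolding neighbours_def by simp

lemma inj_on_doubleton_eq:
  assumes "inj_on f A" "a \<in> A" "b \<in> A" "c \<in> A" "d \<in> A" "{f a, f b} = {f c, f d}"
  shows "{a, b} = {c, d}"
  using assms by (auto simp: doubleton_eq_iff inj_on_eq_iff)

lemma edge_chain_append: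
  "edge_chain E (xs @ [y]) \<longleftrightarrow> edge_chain E xs \<and> (xs \<noteq> [] \<longrightarrow> {last xs, y} \<in> E)"
proof (cases xs rule: rev_cases)
  case (snoc ys x)
  have "edge_chain E (ys @ [x, y]) \<longleftrightarrow> edge_chain E (ys @ [x]) \<and> {x, y} \<in> E"
    unfolding edge_chain_def
    by (auto simp: nth_append less_Suc_eq)
  then show ?thesis using snoc by simp
qed (simp add: edge_chain_def)

lemma rev_nth_consecutive:
  assumes "Suc i < length xs"
  shows "rev xs ! i = xs ! Suc (length xs - Suc (Suc i))"
    and "rev xs ! Suc i = xs ! (length xs - Suc (Suc i))"
  using assms by (auto simp: rev_nth Suc_diff_Suc)

lemma edge_chain_rev: "edge_chain E (rev xs) \<longleftrightarrow> edge_chain E xs"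
proof -
  have "edge_chain E (rev xs)" if "edge_chain E xs" for xs :: "'a list"
    using that rev_nth_consecutive[of _ xs]
    by (auto simp: edge_chain_def insert_commute)
  then show ?thesis by (metis rev_rev_ident)
qed

lemma path_edges_rev: "path_edges (rev xs) = path_edges xs"
proof -
  have "path_edges (rev xs) \<subseteq> path_edges xs" for xs :: "'a list"
    using rev_nth_consecutive[of _ xs]
    by (auto simp: path_edges_def insert_commute)
  then show ?thesis by (metis rev_rev_ident subset_antisym)
qed

lemma finite_path_lists: "finite V \<Longrightarrow> finite (path_lists V E l)"
  by (rule finite_subset[OF _ finite_lists_length_eq[of V l]]) (auto simp: path_lists_def)

lemma rev_in_path_lists: "xs \<in> path_lists V E l \<Longrightarrow> rev xs \<in> path_lists V E l"
  by (simp add: path_lists_def edge_chain_rev)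

lemma rev_neq_if_distinct:
  assumes "distinct xs" "length xs \<ge> 2"
  shows "rev xs \<noteq> xs"
proof
  assume "rev xs = xs"
  moreover have "rev xs ! 0 = xs ! (length xs - 1)"
    using assms(2) by (subst rev_nth) auto
  ultimately have "xs ! 0 = xs ! (length xs - 1)" by simp
  then show False using assms by (subst (asm) nth_eq_iff_index_eq) auto
qed

abbreviation path_edge_set :: "nat \<Rightarrow> nat set set" where
  "path_edge_set l \<equiv> {{i, Suc i} | i. Suc i < l}"

lemma path_lists_copy:
  assumes "xs \<in> path_lists V E l"
  shows "(set xs, path_edges xs) \<in> copies {0..<l} (path_edge_set l) V E"
proof -
  from assms have len: "length xs = l" and dist: "distinct xs" and "set xs \<subseteq> V"
    and chain: "edge_chain E xs" by (auto simp: path_lists_def)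
  have bij: "bij_betw (nth xs) {0..<l} (set xs)" using dist len by (intro bij_betw_nth) auto
  then have inj: "inj_on (nth xs) {0..<l}" by (rule bij_betw_imp_inj_on)
  have "{x, y} \<in> path_edge_set l \<longleftrightarrow> {xs ! x, xs ! y} \<in> path_edges xs"
    if "x \<in> {0..<l}" "y \<in> {0..<l}" for x y
  proof
    assume "{x, y} \<in> path_edge_set l"
    then obtain i where i: "{x, y} = {i, Suc i}" "Suc i < l" by auto
    then have "{xs ! x, xs ! y} = {xs ! i, xs ! Suc i}" by (auto simp: doubleton_eq_iff)
    then show "{xs ! x, xs ! y} \<in> path_edges xs"
      unfolding path_edges_def using i(2) len by auto
  next
    assume "{xs ! x, xs ! y} \<in> path_edges xs"
    then obtain i where i: "{xs ! x, xs ! y} = {xs ! i, xs ! Suc i}" "Suc i < l"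
      unfolding path_edges_def using len by auto
    then have "{x, y} = {i, Suc i}" using inj_on_doubleton_eq[OF inj that] by simp
    then show "{x, y} \<in> path_edge_set l" using i(2) by auto
  qed
  then have "graph_iso {0..<l} (path_edge_set l) (set xs) (path_edges xs)"
    unfolding graph_iso_def using bij by blast
  moreover have "path_edges xs \<subseteq> E" "\<forall>e\<in>path_edges xs. e \<subseteq> set xs"
    using chain len unfolding path_edges_def edge_chain_def by auto
  ultimately show ?thesis using \<open>set xs \<subseteq> V\<close> unfolding copies_def by auto
qed

lemma copy_in_path_lists:
  assumes "simple_graph V E" and "(V', E') \<in> copies {0..<l} (path_edge_set l) V E"
  shows "\<exists>xs \<in> path_lists V E l. (set xs, path_edges xs) = (V', E')"
proof -
  from assms(2) have "V' \<subseteq> V" "E' \<subseteq> E" and E'_in: "\<forall>e\<in>E'. e \<subseteq> V'"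
    and "graph_iso {0..<l} (path_edge_set l) V' E'" by (auto simp: copies_def)
  then obtain f where bij: "bij_betw f {0..<l} V'"
    and iso: "\<And>x y. x < l \<Longrightarrow> y < l \<Longrightarrow> {x, y} \<in> path_edge_set l \<longleftrightarrow> {f x, f y} \<in> E'"
    unfolding graph_iso_def by auto
  define xs where "xs = map f [0..<l]"
  have len: "length xs = l" and nth: "\<And>i. i < l \<Longrightarrow> xs ! i = f i" by (simp_all add: xs_def)
  have set_xs: "set xs = V'" using bij by (simp add: xs_def bij_betw_def)
  have "distinct xs" using bij by (simp add: xs_def distinct_map bij_betw_def)
  have edge: "{f i, f (Suc i)} \<in> E'" if "Suc i < l" for i
    using iso[of i "Suc i"] that by auto
  have "path_edges xs = E'"
  proof
    show "path_edges xs \<subseteq> E'" unfolding path_edges_def using edge len nth by auto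
  next
    show "E' \<subseteq> path_edges xs"
    proof
      fix e assume e: "e \<in> E'"
      then obtain x y where "e = {x, y}"
        using \<open>E' \<subseteq> E\<close> assms(1) unfolding simple_graph_def by blast
      moreover have "x \<in> V'" "y \<in> V'" using E'_in e \<open>e = {x, y}\<close> by auto
      ultimately obtain i j where ij: "i < l" "j < l" "e = {f i, f j}"
        using bij unfolding bij_betw_def by auto
      have "{i, j} \<in> path_edge_set l" using iso[OF ij(1,2)] e ij(3) by simp
      then obtain p where "{i, j} = {p, Suc p}" "Suc p < l" by auto
      then have "e = {xs ! p, xs ! Suc p}" using ij nth by (auto simp: doubleton_eq_iff)
      then show "e \<in> path_edges xs" unfolding path_edges_def using \<open>Suc p < l\<close> len by blast
    qed
  qed
  moreover have "xs \<in> path_lists V E l"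
    unfolding path_lists_def edge_chain_def
    using len \<open>distinct xs\<close> set_xs \<open>V' \<subseteq> V\<close> edge nth \<open>E' \<subseteq> E\<close> by auto
  ultimately show ?thesis using set_xs by blast
qed

lemma inj_consecutive_preserving_cases:
  fixes \<sigma> :: "nat \<Rightarrow> nat"
  assumes "l \<ge> 2" and range: "\<And>i. i < l \<Longrightarrow> \<sigma> i < l" and inj: "inj_on \<sigma> {0..<l}"
    and consec: "\<And>i. Suc i < l \<Longrightarrow> \<sigma> (Suc i) = Suc (\<sigma> i) \<or> \<sigma> i = Suc (\<sigma> (Suc i))"
  shows "(\<forall>i<l. \<sigma> i = i) \<or> (\<forall>i<l. \<sigma> i = l - 1 - i)"
proof -
  have no_turn: "\<sigma> (Suc (Suc i)) \<noteq> \<sigma> i" if "Suc (Suc i) < l" for i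
    using inj_onD[OF inj, of "Suc (Suc i)" i] that by auto
  show ?thesis
  proof (cases "\<sigma> 1 = Suc (\<sigma> 0)")
    case True
    have up: "\<sigma> (Suc i) = Suc (\<sigma> i)" if "Suc i < l" for i
      using that
    proof (induction i)
      case (Suc i)
      then show ?case using consec[of "Suc i"] no_turn[of i] by fastforce
    qed (use True in simp)
    have shift: "\<sigma> i = \<sigma> 0 + i" if "i < l" for i
      using that by (induction i) (auto simp: up)
    have "\<sigma> (l - 1) < l" using range assms(1) by simp
    then have "\<sigma> 0 = 0" using shift[of "l - 1"] assms(1) by simp
    then show ?thesis using shift by simp
  next
    case False
    then have start: "\<sigma> 0 = Suc (\<sigma> 1)" using consec[of 0] assms(1) by auto
    have down: "\<sigma> i = Suc (\<sigma> (Suc i))" if "Suc i < l" for i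
      using that
    proof (induction i)
      case (Suc i)
      then show ?case using consec[of "Suc i"] no_turn[of i] by fastforce
    qed (use start in simp)
    have shift: "\<sigma> i + i = \<sigma> 0" if "i < l" for i
      using that by (induction i) (auto simp: down)
    have "\<sigma> 0 < l" using range assms(1) by simp
    then have "\<sigma> 0 = l - 1" using shift[of "l - 1"] assms(1) by simp
    then show ?thesis using shift by (metis add_implies_diff)
  qed
qed

lemma path_lists_same_copy:
  assumes xs: "xs \<in> path_lists V E l" and ys: "ys \<in> path_lists V E l" and "l \<ge> 2"
    and same_set: "set xs = set ys" and same_edges: "path_edges xs = path_edges ys"
  shows "ys = xs \<or> ys = rev xs"
proof -
  have lx: "length xs = l" and "distinct xs" and ly: "length ys = l" and "distinct ys"
    using xs ys by (auto simp: path_lists_def)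
  have inj_xs: "inj_on (nth xs) {0..<l}" using \<open>distinct xs\<close> lx by (simp add: inj_on_nth)
  have in_image: "ys ! i \<in> nth xs ` {0..<l}" if "i < l" for i
  proof -
    have "ys ! i \<in> set xs" using same_set that ly by simp
    then show ?thesis using lx by (auto simp: set_conv_nth image_def)
  qed
  define \<sigma> where "\<sigma> i = inv_into {0..<l} (nth xs) (ys ! i)" for i
  have \<sigma>_range: "\<sigma> i < l" if "i < l" for i
    using inv_into_into[OF in_image[OF that]] by (simp add: \<sigma>_def)
  have xs_\<sigma>: "xs ! \<sigma> i = ys ! i" if "i < l" for i
    using f_inv_into_f[OF in_image[OF that]] by (simp add: \<sigma>_def)
  have "inj_on \<sigma> {0..<l}"
  proof (rule inj_onI)
    fix i j assume "i \<in> {0..<l}" "j \<in> {0..<l}" "\<sigma> i = \<sigma> j"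
    then have "ys ! i = ys ! j" using xs_\<sigma> by (metis atLeastLessThan_iff)
    then show "i = j" using \<open>distinct ys\<close> ly \<open>i \<in> {0..<l}\<close> \<open>j \<in> {0..<l}\<close>
      by (simp add: nth_eq_iff_index_eq)
  qed
  moreover have "\<sigma> (Suc i) = Suc (\<sigma> i) \<or> \<sigma> i = Suc (\<sigma> (Suc i))" if i: "Suc i < l" for i
  proof -
    have "{ys ! i, ys ! Suc i} \<in> path_edges xs"
      using same_edges i ly unfolding path_edges_def by auto
    then obtain p where "{xs ! \<sigma> i, xs ! \<sigma> (Suc i)} = {xs ! p, xs ! Suc p}" "Suc p < l"
      unfolding path_edges_def using lx xs_\<sigma>[of i] xs_\<sigma>[of "Suc i"] i by auto
    then have "{\<sigma> i, \<sigma> (Suc i)} = {p, Suc p}"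
      using inj_on_doubleton_eq[OF inj_xs, of "\<sigma> i" "\<sigma> (Suc i)" p "Suc p"] \<sigma>_range i by simp
    then show ?thesis by (auto simp: doubleton_eq_iff)
  qed
  ultimately have "(\<forall>i<l. \<sigma> i = i) \<or> (\<forall>i<l. \<sigma> i = l - 1 - i)"
    using inj_consecutive_preserving_cases[OF \<open>l \<ge> 2\<close>] \<sigma>_range by blast
  then show ?thesis
  proof
    assume "\<forall>i<l. \<sigma> i = i"
    then show ?thesis using xs_\<sigma> lx ly by (auto intro: nth_equalityI)
  next
    assume "\<forall>i<l. \<sigma> i = l - 1 - i"
    then have "ys = rev xs" using xs_\<sigma> lx ly by (intro nth_equalityI) (auto simp: rev_nth)
    then show ?thesis ..
  qed
qed

lemma card_path_lists_eq_twice_count_copies: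
  assumes "simple_graph V E" and "l \<ge> 2"
  shows "card (path_lists V E l) = 2 * count_copies (fst (path_graph l)) (snd (path_graph l)) V E"
proof -
  let ?C = "copies {0..<l} (path_edge_set l) V E"
  let ?P = "path_lists V E l"
  define copy_of where "copy_of xs = (set xs, path_edges xs)" for xs :: "'a list"
  have "finite V" using assms(1) by (simp add: simple_graph_def)
  have C_eq: "?C = copy_of ` ?P"
    using path_lists_copy copy_in_path_lists[OF assms(1)] unfolding copy_of_def by fast
  have fibre: "card {xs \<in> ?P. copy_of xs = c} = 2" if c: "c \<in> ?C" for c
  proof -
    obtain xs where xs: "xs \<in> ?P" "copy_of xs = c" using c C_eq by auto
    have "{xs \<in> ?P. copy_of xs = c} = {xs, rev xs}"
      using xs rev_in_path_lists[OF xs(1)] path_lists_same_copy[OF xs(1) _ assms(2)]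
      unfolding copy_of_def by (auto simp: path_edges_rev)
    moreover have "rev xs \<noteq> xs"
      using xs(1) assms(2) rev_neq_if_distinct by (auto simp: path_lists_def)
    ultimately show ?thesis by simp
  qed
  have "finite ?P" using \<open>finite V\<close> by (rule finite_path_lists)
  then have "card ?P = (\<Sum>c\<in>?C. card {xs \<in> ?P. copy_of xs = c})"
    using sum.group[of ?P ?C copy_of "\<lambda>_. 1::nat"] C_eq by simp
  also have "\<dots> = 2 * card ?C" using fibre by simp
  finally show ?thesis by (simp add: count_copies_def path_graph_def)
qed

section \<open>Graphs of large minimum degree contain many paths\<close>

lemma card_path_lists_one: "card (path_lists V E 1) = card V"
proof -
  have "path_lists V E 1 = (\<lambda>v. [v]) ` V"
    by (auto simp: path_lists_def edge_chain_def length_Suc_conv)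
  then show ?thesis by (simp add: card_image inj_on_def)
qed

lemma card_path_lists_Suc_ge:
  assumes "finite V" and min_deg: "\<And>v. v \<in> V \<Longrightarrow> card (neighbours V E v) \<ge> \<delta>"
    and "j \<ge> 1"
  shows "card (path_lists V E (Suc j)) \<ge> card (path_lists V E j) * (\<delta> - j)"
proof -
  let ?ext = "\<lambda>xs. neighbours V E (last xs) - set xs"
  define S where "S = Sigma (path_lists V E j) ?ext"
  have ext_ge: "\<delta> - j \<le> card (?ext xs)" if xs: "xs \<in> path_lists V E j" for xs
  proof -
    have "xs \<noteq> []" using xs \<open>j \<ge> 1\<close> by (auto simp: path_lists_def)
    then have "last xs \<in> V" using xs by (auto simp: path_lists_def)
    then have "\<delta> \<le> card (neighbours V E (last xs))" by (rule min_deg)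
    moreover have "card (set xs) = j" using xs by (simp add: path_lists_def distinct_card)
    moreover have "card (neighbours V E (last xs)) - card (set xs) \<le> card (?ext xs)"
      by (rule diff_card_le_card_Diff) simp
    ultimately show ?thesis by linarith
  qed
  have "card (path_lists V E j) * (\<delta> - j) \<le> (\<Sum>xs\<in>path_lists V E j. card (?ext xs))"
    using sum_mono[of "path_lists V E j" "\<lambda>_. \<delta> - j"] ext_ge by simp
  also have "\<dots> = card S"
    unfolding S_def using finite_path_lists[OF \<open>finite V\<close>] finite_neighbours[OF \<open>finite V\<close>]
    by (simp add: card_SigmaI)
  also have "\<dots> \<le> card (path_lists V E (Suc j))"
  proof (rule card_inj_on_le)
    show "inj_on (\<lambda>(xs, y). xs @ [y]) S" unfolding S_def inj_on_def by auto
    show "(\<lambda>(xs, y). xs @ [y]) ` S \<subseteq> path_lists V E (Suc j)"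
      using \<open>j \<ge> 1\<close> by (auto simp: S_def path_lists_def edge_chain_append neighbours_def)
  qed (rule finite_path_lists[OF \<open>finite V\<close>])
  finally show ?thesis .
qed

lemma card_path_lists_ge:
  assumes "finite V" and "\<And>v. v \<in> V \<Longrightarrow> card (neighbours V E v) \<ge> \<delta>"
    and "l \<ge> 1"
  shows "card (path_lists V E l) \<ge> card V * (\<delta> - l) ^ (l - 1)"
  using \<open>l \<ge> 1\<close>
proof (induction l rule: dec_induct)
  case (step m)
  have "card V * (\<delta> - Suc m) ^ (Suc m - 1) = card V * (\<delta> - Suc m) ^ (m - 1) * (\<delta> - Suc m)"
    using step(1) by (cases m) auto
  also have "\<dots> \<le> card V * (\<delta> - m) ^ (m - 1) * (\<delta> - m)"
    by (intro mult_mono power_mono) auto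
  also have "\<dots> \<le> card (path_lists V E m) * (\<delta> - m)"
    using step.IH by (rule mult_right_mono) simp
  also have "\<dots> \<le> card (path_lists V E (Suc m))"
    using card_path_lists_Suc_ge[OF assms(1,2) step(1)] .
  finally show ?case .
qed (use card_path_lists_one[of V E] in simp)

section \<open>The complete bipartite graph between even and odd vertices\<close>

definition parity_edges :: "nat \<Rightarrow> nat set set" where
  "parity_edges n = {{x, y} | x y. x < n \<and> y < n \<and> odd (x + y)}"

lemma parity_edges_odd: "{a, b} \<in> parity_edges n \<Longrightarrow> odd (a + b)"
  unfolding parity_edges_def by (auto simp: doubleton_eq_iff add.commute)

lemma simple_graph_parity_edges: "simple_graph {0..<n} (parity_edges n)"
proof -
  have "x \<noteq> y" if "odd (x + y)" for x y :: nat using that by auto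
  then show ?thesis unfolding simple_graph_def parity_edges_def by auto
qed

lemma card_neighbours_parity_edges_ge:
  assumes "v \<in> {0..<n}"
  shows "card (neighbours {0..<n} (parity_edges n) v) \<ge> n div 2"
proof -
  define opposite where "opposite = (\<lambda>j. 2 * j + (if even v then 1 else 0)) ` {..<n div 2}"
  have "n div 2 = card opposite" unfolding opposite_def by (simp add: card_image inj_on_def)
  also have "\<dots> \<le> card (neighbours {0..<n} (parity_edges n) v)"
  proof (rule card_mono)
    have "{v, u} \<in> parity_edges n" if "u < n" "odd (v + u)" for u
      unfolding parity_edges_def using assms that by auto
    then show "opposite \<subseteq> neighbours {0..<n} (parity_edges n) v"
      unfolding opposite_def neighbours_def by auto
  qed (simp add: neighbours_def)
  finally show ?thesis .
qed

lemma parity_edges_odd_cycle_free: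
  assumes "odd L"
  shows "H_free (fst (cycle_graph L)) (snd (cycle_graph L)) {0..<n} (parity_edges n)"
proof -
  have False if "(V', E') \<in> copies {0..<L} {{i, Suc i mod L} | i. i < L} {0..<n} (parity_edges n)"
    for V' E'
  proof -
    from that have E': "E' \<subseteq> parity_edges n"
      and "graph_iso {0..<L} {{i, Suc i mod L} | i. i < L} V' E'" by (auto simp: copies_def)
    then obtain f where iso: "\<forall>x\<in>{0..<L}. \<forall>y\<in>{0..<L}.
        {x, y} \<in> {{i, Suc i mod L} | i. i < L} \<longleftrightarrow> {f x, f y} \<in> E'"
      unfolding graph_iso_def by blast
    have step: "odd (f i + f (Suc i mod L))" if "i < L" for i
    proof -
      have "{i, Suc i mod L} \<in> {{i, Suc i mod L} | i. i < L}" using that by blast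
      then have "{f i, f (Suc i mod L)} \<in> E'" using iso that by simp
      then show ?thesis using E' parity_edges_odd by blast
    qed
    have parity: "even (f i + i + f 0)" if "i < L" for i
      using that
    proof (induction i)
      case (Suc i)
      then show ?case using step[of i] by (simp add: even_add) blast
    qed simp
    have "L > 0" using assms by (rule odd_pos)
    then show False
      using parity[of "L - 1"] step[of "L - 1"] assms by (simp add: even_add)
  qed
  then show ?thesis unfolding H_free_def cycle_graph_def by fastforce
qed

section \<open>Walks in graphs with bounded degree sums along edges\<close>

lemma product_le_square_half_sum:
  fixes a b s :: real
  assumes "0 \<le> a" "0 \<le> b" "a + b \<le> s"
  shows "a * b \<le> (s / 2) ^ 2"
proof -
  have "sqrt (a * b) \<le> s / 2" using arith_geo_mean_sqrt[OF assms(1,2)] assms(3) by simp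
  then have "sqrt (a * b) ^ 2 \<le> (s / 2) ^ 2" by (rule power_mono) (use assms in simp)
  then show ?thesis using assms(1,2) by simp
qed

lemma two_le_mult_inverse_sum:
  fixes P Q c :: real
  assumes "0 < P" "0 < Q" "P * Q \<le> c ^ 2" "0 \<le> c"
  shows "2 \<le> c * (1 / P + 1 / Q)"
proof -
  have "sqrt (P * Q) \<le> c" using real_sqrt_le_mono[OF assms(3)] assms(4) by simp
  have "2 * (P * Q) = 2 * sqrt (P * Q) * sqrt (P * Q)" using assms(1,2) by simp
  also have "\<dots> \<le> (P + Q) * c"
    using arith_geo_mean_sqrt[of P Q] assms \<open>sqrt (P * Q) \<le> c\<close> by (intro mult_mono) auto
  finally show ?thesis using assms(1,2) by (simp add: field_simps)
qed

definition walks :: "'a set \<Rightarrow> ('a \<Rightarrow> 'a \<Rightarrow> bool) \<Rightarrow> nat \<Rightarrow> 'a list set" where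
  "walks V R m = {xs. length xs = Suc m \<and> set xs \<subseteq> V \<and> (\<forall>i<m. R (xs ! i) (xs ! Suc i))}"

definition rel_degree :: "'a set \<Rightarrow> ('a \<Rightarrow> 'a \<Rightarrow> bool) \<Rightarrow> 'a \<Rightarrow> nat" where
  "rel_degree V R v = card {u \<in> V. R v u}"

text \<open>The probability that the random walk along \<open>R\<close> started at \<open>hd xs\<close> follows \<open>xs\<close>.\<close>

definition walk_weight :: "'a set \<Rightarrow> ('a \<Rightarrow> 'a \<Rightarrow> bool) \<Rightarrow> 'a list \<Rightarrow> real" where
  "walk_weight V R xs = 1 / (\<Prod>i<length xs - 1. real (rel_degree V R (xs ! i)))"

lemma finite_walks: "finite V \<Longrightarrow> finite (walks V R m)"
  by (rule finite_subset[OF _ finite_lists_length_eq[of V "Suc m"]]) (auto simp: walks_def)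

lemma hd_in_walks: "xs \<in> walks V R m \<Longrightarrow> hd xs \<in> V"
  by (cases xs) (auto simp: walks_def)

lemma walks_Suc_from:
  "{xs \<in> walks V R (Suc m). hd xs = v} = (\<lambda>ys. v # ys) ` {ys \<in> walks V R m. R v (hd ys)}"
  if "v \<in> V"
proof (intro equalityI subsetI)
  fix xs assume xs: "xs \<in> {xs \<in> walks V R (Suc m). hd xs = v}"
  then obtain ys where ys: "xs = v # ys" "length ys = Suc m"
    by (cases xs) (auto simp: walks_def)
  have steps: "\<forall>i<Suc m. R ((v # ys) ! i) ((v # ys) ! Suc i)"
    using xs ys(1) by (simp add: walks_def)
  have "R v (hd ys)" using steps[rule_format, of 0] ys(2) by (cases ys) auto
  moreover have "\<forall>i<m. R (ys ! i) (ys ! Suc i)"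
    using steps by (metis Suc_less_eq nth_Cons_Suc)
  ultimately show "xs \<in> (\<lambda>ys. v # ys) ` {ys \<in> walks V R m. R v (hd ys)}"
    using xs ys by (auto simp: walks_def)
next
  fix xs assume "xs \<in> (\<lambda>ys. v # ys) ` {ys \<in> walks V R m. R v (hd ys)}"
  then obtain ys where ys: "xs = v # ys" "ys \<in> walks V R m" "R v (hd ys)" by auto
  moreover have "hd ys = ys ! 0" using ys(2) by (cases ys) (auto simp: walks_def)
  ultimately have "\<forall>i<Suc m. R (xs ! i) (xs ! Suc i)"
    by (auto simp: walks_def less_Suc_eq_0_disj)
  then show "xs \<in> {xs \<in> walks V R (Suc m). hd xs = v}"
    using ys that by (auto simp: walks_def)
qed

lemma sum_walk_weight_from_le:
  assumes "finite V" "v \<in> V"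
  shows "(\<Sum>xs \<in> {xs \<in> walks V R m. hd xs = v}. walk_weight V R xs) \<le> 1"
  using assms(2)
proof (induction m arbitrary: v)
  case 0
  have "{xs \<in> walks V R 0. hd xs = v} = {[v]}"
    using 0 by (auto simp: walks_def length_Suc_conv)
  then show ?case by (simp add: walk_weight_def)
next
  case (Suc m)
  define N where "N = {u \<in> V. R v u}"
  define S where "S = {ys \<in> walks V R m. R v (hd ys)}"
  have hd_S: "hd ys \<in> N" if "ys \<in> S" for ys
    using that hd_in_walks by (auto simp: S_def N_def)
  have "(\<Sum>ys\<in>S. walk_weight V R ys) = (\<Sum>u\<in>N. \<Sum>ys\<in>{ys \<in> S. hd ys = u}. walk_weight V R ys)"
    by (rule sum.group[symmetric]) (use finite_walks[OF assms(1)] assms(1) hd_S in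
        \<open>auto simp: S_def N_def\<close>)
  also have "\<dots> \<le> (\<Sum>u\<in>N. 1)"
  proof (rule sum_mono)
    fix u assume "u \<in> N"
    then have "{ys \<in> S. hd ys = u} = {xs \<in> walks V R m. hd xs = u}" by (auto simp: S_def N_def)
    then show "(\<Sum>ys\<in>{ys \<in> S. hd ys = u}. walk_weight V R ys) \<le> 1"
      using Suc.IH[of u] \<open>u \<in> N\<close> by (simp add: N_def)
  qed
  finally have "(\<Sum>ys\<in>S. walk_weight V R ys) \<le> rel_degree V R v"
    by (simp add: N_def rel_degree_def)
  moreover have "walk_weight V R (v # ys) = walk_weight V R ys / rel_degree V R v" if "ys \<in> S" for ys
    using that by (simp add: S_def walks_def walk_weight_def prod.lessThan_Suc_shift del: prod.lessThan_Suc)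
  ultimately have "(\<Sum>ys\<in>S. walk_weight V R (v # ys)) \<le> 1"
    by (simp add: sum_divide_distrib[symmetric] divide_le_eq_1) linarith
  then show ?case
    unfolding walks_Suc_from[OF Suc.prems] S_def by (subst sum.reindex) (auto simp: inj_on_def)
qed

lemma sum_walk_weight_le:
  assumes "finite V"
  shows "(\<Sum>xs \<in> walks V R m. walk_weight V R xs) \<le> card V"
proof -
  have "(\<Sum>xs \<in> walks V R m. walk_weight V R xs)
      = (\<Sum>v\<in>V. \<Sum>xs\<in>{xs \<in> walks V R m. hd xs = v}. walk_weight V R xs)"
    by (rule sum.group[symmetric]) (use finite_walks[OF assms] assms hd_in_walks in auto)
  also have "\<dots> \<le> (\<Sum>v\<in>V. 1)"
    by (rule sum_mono) (rule sum_walk_weight_from_le[OF assms])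
  finally show ?thesis by simp
qed

lemma rev_walks:
  assumes "\<And>x y. R x y \<Longrightarrow> R y x"
  shows "rev ` walks V R m = walks V R m"
proof -
  have rev_in: "rev xs \<in> walks V R m" if "xs \<in> walks V R m" for xs
    using that rev_nth_consecutive[of _ xs] assms
    by (auto simp: walks_def)
  then have "walks V R m \<subseteq> rev ` walks V R m" using rev_rev_ident by (metis image_eqI subsetI)
  then show ?thesis using rev_in by auto
qed

lemma walk_weight_rev:
  assumes "length xs = Suc m"
  shows "walk_weight V R (rev xs) = 1 / (\<Prod>i<m. real (rel_degree V R (xs ! Suc i)))"
proof -
  have "(\<Prod>i<m. real (rel_degree V R (rev xs ! i))) = (\<Prod>i<m. real (rel_degree V R (xs ! (m - i))))"
    using assms by (intro prod.cong) (auto simp: rev_nth)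
  also have "\<dots> = (\<Prod>i<m. real (rel_degree V R (xs ! Suc (m - Suc i))))"
    by (intro prod.cong) (auto simp: Suc_diff_Suc)
  also have "\<dots> = (\<Prod>i<m. real (rel_degree V R (xs ! Suc i)))"
    by (rule prod.nat_diff_reindex)
  finally show ?thesis using assms by (simp add: walk_weight_def)
qed

text \<open>By AM-GM along each edge, the weights of a walk from its two ends have product at least
  \<open>1 / ((s / 2) ^ m)\<^sup>2\<close>.\<close>

lemma walk_weight_add_rev_ge:
  assumes "finite V" and R_sym: "\<And>x y. R x y \<Longrightarrow> R y x" and closed: "\<And>x y. R x y \<Longrightarrow> y \<in> V"
    and deg: "\<And>x y. R x y \<Longrightarrow> real (rel_degree V R x) + real (rel_degree V R y) \<le> s"
    and "s \<ge> 0" "xs \<in> walks V R m"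
  shows "2 \<le> (s / 2) ^ m * (walk_weight V R xs + walk_weight V R (rev xs))"
proof -
  let ?d = "\<lambda>x. real (rel_degree V R x)"
  have deg_pos: "0 < ?d x" if "R x y" for x y
    using closed[OF that] that \<open>finite V\<close> by (auto simp: rel_degree_def card_gt_0_iff)
  have steps: "R (xs ! i) (xs ! Suc i)" if "i < m" for i
    using \<open>xs \<in> walks V R m\<close> that by (simp add: walks_def)
  define P where "P = (\<Prod>i<m. ?d (xs ! i))"
  define Q where "Q = (\<Prod>i<m. ?d (xs ! Suc i))"
  have "P * Q = (\<Prod>i<m. ?d (xs ! i) * ?d (xs ! Suc i))"
    by (simp add: P_def Q_def prod.distrib)
  also have "\<dots> \<le> (\<Prod>i<m. (s / 2) ^ 2)"
    by (rule prod_mono) (use steps deg in \<open>auto intro: product_le_square_half_sum\<close>)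
  also have "\<dots> = ((s / 2) ^ m) ^ 2" by (simp add: power_mult[symmetric] mult.commute)
  finally have "P * Q \<le> ((s / 2) ^ m) ^ 2" .
  moreover have "0 < P" unfolding P_def using deg_pos[OF steps] by (auto intro!: prod_pos)
  moreover have "0 < Q" unfolding Q_def using deg_pos[OF R_sym[OF steps]] by (auto intro!: prod_pos)
  ultimately have "2 \<le> (s / 2) ^ m * (1 / P + 1 / Q)"
    using two_le_mult_inverse_sum \<open>s \<ge> 0\<close> by simp
  then show ?thesis using \<open>xs \<in> walks V R m\<close> walk_weight_rev[of xs m V R]
    by (simp add: walks_def walk_weight_def P_def Q_def)
qed

lemma card_walks_le:
  assumes "finite V" and R_sym: "\<And>x y. R x y \<Longrightarrow> R y x" and closed: "\<And>x y. R x y \<Longrightarrow> y \<in> V"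
    and deg: "\<And>x y. R x y \<Longrightarrow> real (rel_degree V R x) + real (rel_degree V R y) \<le> s"
    and "s \<ge> 0"
  shows "real (card (walks V R m)) \<le> card V * (s / 2) ^ m"
proof -
  define c where "c = (s / 2) ^ m"
  have "2 * real (card (walks V R m)) = (\<Sum>xs\<in>walks V R m. 2)" by simp
  also have "\<dots> \<le> (\<Sum>xs\<in>walks V R m. c * (walk_weight V R xs + walk_weight V R (rev xs)))"
    unfolding c_def by (intro sum_mono walk_weight_add_rev_ge[OF assms])
  also have "\<dots> = c * (2 * (\<Sum>xs\<in>walks V R m. walk_weight V R xs))"
  proof -
    have "(\<Sum>xs\<in>walks V R m. walk_weight V R (rev xs)) = (\<Sum>xs\<in>walks V R m. walk_weight V R xs)"
      using sum.reindex[of rev "walks V R m" "walk_weight V R"] rev_walks[where V=V and m=m, OF R_sym]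
      by (simp add: inj_on_def)
    then show ?thesis by (simp add: sum.distrib sum_distrib_left[symmetric])
  qed
  also have "\<dots> \<le> c * (2 * card V)"
    using sum_walk_weight_le[OF \<open>finite V\<close>] \<open>s \<ge> 0\<close> by (intro mult_left_mono) (auto simp: c_def)
  finally show ?thesis by (simp add: c_def mult.commute)
qed

section \<open>Odd-cycle-free graphs\<close>

lemma neighbours_mono: "W \<subseteq> V \<Longrightarrow> neighbours W E v \<subseteq> neighbours V E v"
  unfolding neighbours_def by auto

lemma path_lists_nonempty_if_min_degree:
  assumes "simple_graph V E" "W \<subseteq> V" "W \<noteq> {}" "t \<ge> 1"
    and min_deg: "\<And>v. v \<in> W \<Longrightarrow> card (neighbours W E v) \<ge> t - 1"
  shows "path_lists W E t \<noteq> {}"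
proof -
  have "finite W" using assms(1,2) finite_subset by (auto simp: simple_graph_def)
  have "path_lists W E j \<noteq> {}" if "1 \<le> j" "j \<le> t" for j
    using that
  proof (induction j rule: dec_induct)
    case base
    obtain w where "w \<in> W" using assms(3) by auto
    then have "[w] \<in> path_lists W E 1" by (simp add: path_lists_def edge_chain_def)
    then show ?case by auto
  next
    case (step j)
    then obtain xs where xs: "xs \<in> path_lists W E j" using step.prems by auto
    then have "xs \<noteq> []" and "card (set xs) = j"
      using step(1) by (auto simp: path_lists_def distinct_card)
    then have last: "last xs \<in> W" using xs by (auto simp: path_lists_def)
    have "last xs \<notin> neighbours W E (last xs)"
      using not_in_neighbours_self[OF assms(1)] neighbours_mono[OF assms(2)] by blast
    moreover have "card (set xs - {last xs}) < card (neighbours W E (last xs))"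
      using min_deg[OF last] step.prems \<open>card (set xs) = j\<close> \<open>xs \<noteq> []\<close> step(1) by simp
    ultimately obtain y where y: "y \<in> neighbours W E (last xs)" "y \<notin> set xs"
      using card_mono[of "set xs - {last xs}" "neighbours W E (last xs)"] by force
    then have "xs @ [y] \<in> path_lists W E (Suc j)"
      using xs by (auto simp: path_lists_def edge_chain_append neighbours_def)
    then show ?case by auto
  qed
  then show ?thesis using assms(4) by simp
qed

lemma sum_degree_le_remove_vertex:
  assumes "simple_graph V E" "W \<subseteq> V" "w \<in> W"
  shows "(\<Sum>v\<in>W. card (neighbours W E v))
    \<le> 2 * card (neighbours W E w) + (\<Sum>v\<in>W - {w}. card (neighbours (W - {w}) E v))"
proof -
  define W' where "W' = W - {w}"
  have "finite W" "finite W'"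
    using assms(1,2) finite_subset by (auto simp: simple_graph_def W'_def)
  have "w \<notin> neighbours W E w"
    using not_in_neighbours_self[OF assms(1)] neighbours_mono[OF assms(2)] by blast
  have split: "card (neighbours W E v) \<le> card (neighbours W' E v) + card ({v} \<inter> neighbours W E w)"
    if "v \<in> W'" for v
  proof -
    have "neighbours W E v \<subseteq> neighbours W' E v \<union> (\<lambda>_. w) ` ({v} \<inter> neighbours W E w)"
      using that assms(3) by (auto simp: W'_def neighbours_def insert_commute)
    then have "card (neighbours W E v)
        \<le> card (neighbours W' E v \<union> (\<lambda>_. w) ` ({v} \<inter> neighbours W E w))"
      by (rule card_mono[rotated]) (simp add: \<open>finite W'\<close> finite_neighbours)
    also have "\<dots> \<le> card (neighbours W' E v) + card ((\<lambda>_. w) ` ({v} \<inter> neighbours W E w))"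
      by (rule card_Un_le)
    also have "\<dots> \<le> card (neighbours W' E v) + card ({v} \<inter> neighbours W E w)"
      by (simp add: card_image_le)
    finally show ?thesis .
  qed
  have edges_to_w: "(\<Sum>v\<in>W'. card ({v} \<inter> neighbours W E w)) = card (neighbours W E w)"
  proof -
    have "(\<Sum>v\<in>W'. card ({v} \<inter> neighbours W E w))
        = (\<Sum>v\<in>W'. if v \<in> neighbours W E w then 1 else 0)"
      by (intro sum.cong) auto
    also have "\<dots> = card {v \<in> W'. v \<in> neighbours W E w}"
      using \<open>finite W'\<close> by (simp add: sum.inter_filter[symmetric])
    also have "{v \<in> W'. v \<in> neighbours W E w} = neighbours W E w"
      using \<open>w \<notin> neighbours W E w\<close> by (auto simp: W'_def neighbours_def)
    finally show ?thesis .
  qed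
  have "(\<Sum>v\<in>W. card (neighbours W E v))
      = card (neighbours W E w) + (\<Sum>v\<in>W'. card (neighbours W E v))"
    using \<open>finite W\<close> assms(3) by (simp add: W'_def sum.remove)
  also have "\<dots> \<le> card (neighbours W E w)
      + ((\<Sum>v\<in>W'. card (neighbours W' E v)) + (\<Sum>v\<in>W'. card ({v} \<inter> neighbours W E w)))"
    using split by (simp add: sum.distrib[symmetric] sum_mono)
  finally show ?thesis using edges_to_w by (simp add: W'_def)
qed

lemma sum_degree_le_if_path_free:
  assumes "simple_graph V E" "W \<subseteq> V" "t \<ge> 1" "path_lists W E t = {}"
  shows "(\<Sum>v\<in>W. card (neighbours W E v)) \<le> 2 * (t - 1) * card W"
  using assms(2,4)
proof (induction "card W" arbitrary: W rule: less_induct)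
  case less
  show ?case
  proof (cases "W = {}")
    case False
    have "finite W" using assms(1) less.prems(1) finite_subset by (auto simp: simple_graph_def)
    obtain w where w: "w \<in> W" "card (neighbours W E w) < t - 1"
      using path_lists_nonempty_if_min_degree[OF assms(1) less.prems(1) False assms(3)]
        less.prems(2) by force
    have "card (W - {w}) < card W" by (rule card_Diff1_less[OF \<open>finite W\<close> w(1)])
    moreover have "W - {w} \<subseteq> V" "path_lists (W - {w}) E t = {}"
      using less.prems by (auto simp: path_lists_def)
    ultimately have "(\<Sum>v\<in>W - {w}. card (neighbours (W - {w}) E v)) \<le> 2 * (t - 1) * card (W - {w})"
      by (rule less.hyps)
    moreover have "card W = Suc (card (W - {w}))"
      using \<open>card (W - {w}) < card W\<close> \<open>finite W\<close> w(1) by simp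
    ultimately show ?thesis
      using sum_degree_le_remove_vertex[OF assms(1) less.prems(1) w(1)] w(2) by simp
  qed simp
qed

lemma copies_cycle_graph_nonempty:
  assumes "distinct cs" "length cs = L" "set cs \<subseteq> V"
    and cyc: "\<And>i. i < L \<Longrightarrow> {cs ! i, cs ! (Suc i mod L)} \<in> E"
  shows "copies (fst (cycle_graph L)) (snd (cycle_graph L)) V E \<noteq> {}"
proof -
  let ?C = "{{i, Suc i mod L} | i. i < L}"
  define E' where "E' = {{cs ! i, cs ! (Suc i mod L)} | i. i < L}"
  have bij: "bij_betw (nth cs) {0..<L} (set cs)" using assms(1,2) by (intro bij_betw_nth) auto
  then have inj: "inj_on (nth cs) {0..<L}" by (rule bij_betw_imp_inj_on)
  have "{x, y} \<in> ?C \<longleftrightarrow> {cs ! x, cs ! y} \<in> E'" if "x \<in> {0..<L}" "y \<in> {0..<L}" for x y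
  proof
    assume "{x, y} \<in> ?C"
    then obtain i where i: "{x, y} = {i, Suc i mod L}" "i < L" by auto
    then have "{cs ! x, cs ! y} = {cs ! i, cs ! (Suc i mod L)}" by (auto simp: doubleton_eq_iff)
    then show "{cs ! x, cs ! y} \<in> E'" unfolding E'_def using i(2) by auto
  next
    assume "{cs ! x, cs ! y} \<in> E'"
    then obtain i where i: "{cs ! x, cs ! y} = {cs ! i, cs ! (Suc i mod L)}" "i < L"
      unfolding E'_def by auto
    then have "{x, y} = {i, Suc i mod L}" using inj_on_doubleton_eq[OF inj that] by simp
    then show "{x, y} \<in> ?C" using i(2) by auto
  qed
  then have "graph_iso {0..<L} ?C (set cs) E'" unfolding graph_iso_def using bij by blast
  moreover have "E' \<subseteq> E" "\<forall>e\<in>E'. e \<subseteq> set cs"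
    using cyc assms(2) by (auto simp: E'_def intro!: nth_mem mod_less_divisor)
  ultimately have "(set cs, E') \<in> copies {0..<L} ?C V E"
    unfolding copies_def using assms(3) by auto
  then show ?thesis unfolding cycle_graph_def by auto
qed

lemma neighbours_path_free_if_odd_cycle_free:
  assumes "simple_graph V E" "u \<in> V" "k \<ge> 1"
    and "H_free (fst (cycle_graph (2 * k + 1))) (snd (cycle_graph (2 * k + 1))) V E"
  shows "path_lists (neighbours V E u) E (2 * k) = {}"
proof (rule ccontr)
  assume "path_lists (neighbours V E u) E (2 * k) \<noteq> {}"
  then obtain xs where xs: "length xs = 2 * k" "distinct xs" "set xs \<subseteq> neighbours V E u"
    "edge_chain E xs" by (auto simp: path_lists_def)
  have "u \<notin> set xs" using xs(3) not_in_neighbours_self[OF assms(1)] by auto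
  have spoke: "{u, xs ! j} \<in> E" if "j < 2 * k" for j
  proof -
    have "xs ! j \<in> set xs" using xs(1) that by simp
    then show ?thesis using xs(3) by (auto simp: neighbours_def)
  qed
  have "{(u # xs) ! i, (u # xs) ! (Suc i mod (2 * k + 1))} \<in> E" if "i < 2 * k + 1" for i
  proof (cases "i = 2 * k")
    case True
    then show ?thesis using spoke[of "2 * k - 1"] assms(3) by (simp add: insert_commute)
  next
    case False
    then show ?thesis
      using that spoke[of 0] xs(1,4) assms(3) by (cases i) (auto simp: edge_chain_def)
  qed
  then have "copies (fst (cycle_graph (2 * k + 1))) (snd (cycle_graph (2 * k + 1))) V E \<noteq> {}"
    using xs \<open>u \<notin> set xs\<close> assms(2)
    by (intro copies_cycle_graph_nonempty[of "u # xs"]) (auto simp: neighbours_def)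
  then show False using assms(4) by (simp add: H_free_def)
qed

definition codegree :: "'a set \<Rightarrow> 'a set set \<Rightarrow> 'a \<Rightarrow> 'a \<Rightarrow> nat" where
  "codegree V E u v = card (neighbours V E u \<inter> neighbours V E v)"

lemma sum_codegree_le_if_odd_cycle_free:
  assumes "simple_graph V E" "u \<in> V" "k \<ge> 1"
    and "H_free (fst (cycle_graph (2 * k + 1))) (snd (cycle_graph (2 * k + 1))) V E"
  shows "(\<Sum>v\<in>neighbours V E u. codegree V E u v) \<le> 2 * (2 * k - 1) * card V"
proof -
  let ?N = "neighbours V E u"
  have "finite V" using assms(1) by (simp add: simple_graph_def)
  have "neighbours ?N E v = ?N \<inter> neighbours V E v" for v by (auto simp: neighbours_def)
  then have "(\<Sum>v\<in>?N. card (?N \<inter> neighbours V E v)) \<le> 2 * (2 * k - 1) * card ?N"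
    using sum_degree_le_if_path_free[OF assms(1) _ _ neighbours_path_free_if_odd_cycle_free[OF assms]]
      assms(3) by (simp add: neighbours_def)
  also have "\<dots> \<le> 2 * (2 * k - 1) * card V"
    using \<open>finite V\<close> by (intro mult_left_mono card_mono) (auto simp: neighbours_def)
  finally show ?thesis by (simp add: codegree_def)
qed

lemma card_lists_with_pair_at_le:
  assumes "finite V" "Suc i < l"
  shows "card {xs. length xs = l \<and> set xs \<subseteq> V \<and> (xs ! i, xs ! Suc i) \<in> P}
    \<le> card (P \<inter> V \<times> V) * card V ^ (l - 2)"
proof -
  let ?A = "{xs. length xs = l \<and> set xs \<subseteq> V \<and> (xs ! i, xs ! Suc i) \<in> P}"
  let ?L = "{ys. set ys \<subseteq> V \<and> length ys = l - 2}"
  define split where "split xs = ((xs ! i, xs ! Suc i), take i xs @ drop (Suc (Suc i)) xs)"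
    for xs :: "'a list"
  have decomp: "xs = take i xs @ xs ! i # xs ! Suc i # drop (Suc (Suc i)) xs"
    if "length xs = l" for xs :: "'a list"
    using that assms(2) by (simp add: Cons_nth_drop_Suc)
  have "inj_on split ?A"
  proof (rule inj_onI)
    fix xs ys assume "xs \<in> ?A" "ys \<in> ?A" "split xs = split ys"
    moreover have "length (take i xs) = length (take i ys)"
      using \<open>xs \<in> ?A\<close> \<open>ys \<in> ?A\<close> by simp
    ultimately show "xs = ys"
      using decomp[of xs] decomp[of ys] by (auto simp: split_def)
  qed
  moreover have "split ` ?A \<subseteq> (P \<inter> V \<times> V) \<times> ?L"
    using assms(2) by (auto simp: split_def dest!: in_set_takeD in_set_dropD intro!: nth_mem)
  moreover have "finite ?L" using finite_lists_length_eq[OF assms(1)] by simp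
  ultimately have "card ?A \<le> card ((P \<inter> V \<times> V) \<times> ?L)"
    using assms(1) by (intro card_inj_on_le) auto
  then show ?thesis using assms(1) by (simp add: card_cartesian_product card_lists_length_eq)
qed

definition heavy_edges :: "'a set \<Rightarrow> 'a set set \<Rightarrow> real \<Rightarrow> ('a \<times> 'a) set" where
  "heavy_edges V E \<tau> = Sigma V (\<lambda>u. {v \<in> neighbours V E u. \<tau> \<le> real (codegree V E u v)})"

lemma card_heavy_edges_le:
  fixes \<tau> :: real
  assumes "simple_graph V E" "k \<ge> 1"
    and "H_free (fst (cycle_graph (2 * k + 1))) (snd (cycle_graph (2 * k + 1))) V E"
  shows "real (card (heavy_edges V E \<tau>)) * \<tau> \<le> 2 * (2 * real k - 1) * real (card V) ^ 2"
proof -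
  have "finite V" using assms(1) by (simp add: simple_graph_def)
  have "real (card (heavy_edges V E \<tau>)) * \<tau> = (\<Sum>p\<in>heavy_edges V E \<tau>. \<tau>)" by simp
  also have "\<dots> \<le> (\<Sum>(u, v)\<in>heavy_edges V E \<tau>. real (codegree V E u v))"
    by (rule sum_mono) (auto simp: heavy_edges_def)
  also have "\<dots> = (\<Sum>u\<in>V. \<Sum>v\<in>{v \<in> neighbours V E u. \<tau> \<le> real (codegree V E u v)}. real (codegree V E u v))"
    unfolding heavy_edges_def
    using \<open>finite V\<close> finite_neighbours[OF \<open>finite V\<close>] by (subst sum.Sigma) auto
  also have "\<dots> \<le> (\<Sum>u\<in>V. \<Sum>v\<in>neighbours V E u. real (codegree V E u v))"
    using finite_neighbours[OF \<open>finite V\<close>] by (intro sum_mono sum_mono2) auto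
  also have "\<dots> \<le> (\<Sum>u\<in>V. real (2 * (2 * k - 1) * card V))"
  proof (rule sum_mono)
    fix u assume "u \<in> V"
    show "(\<Sum>v\<in>neighbours V E u. real (codegree V E u v)) \<le> real (2 * (2 * k - 1) * card V)"
      using sum_codegree_le_if_odd_cycle_free[OF assms(1) \<open>u \<in> V\<close> assms(2,3)]
      unfolding of_nat_sum[symmetric] of_nat_le_iff .
  qed
  also have "\<dots> = 2 * (2 * real k - 1) * real (card V) ^ 2"
    using assms(2) by (simp add: of_nat_diff power2_eq_square)
  finally show ?thesis .
qed

definition light_edge :: "'a set \<Rightarrow> 'a set set \<Rightarrow> real \<Rightarrow> 'a \<Rightarrow> 'a \<Rightarrow> bool" where
  "light_edge V E \<tau> u v \<longleftrightarrow> u \<in> V \<and> v \<in> V \<and> {u, v} \<in> E \<and> real (codegree V E u v) < \<tau>"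

lemma rel_degree_light_edge_sum_le:
  fixes \<tau> :: real
  assumes "finite V" "light_edge V E \<tau> x y"
  shows "real (rel_degree V (light_edge V E \<tau>) x) + real (rel_degree V (light_edge V E \<tau>) y)
    \<le> real (card V) + \<tau>"
proof -
  have le_deg: "rel_degree V (light_edge V E \<tau>) z \<le> card (neighbours V E z)" for z
    unfolding rel_degree_def using \<open>finite V\<close>
    by (intro card_mono) (auto simp: light_edge_def neighbours_def)
  have "card (neighbours V E x) + card (neighbours V E y)
      = card (neighbours V E x \<union> neighbours V E y) + codegree V E x y"
    unfolding codegree_def by (intro card_Un_Int finite_neighbours assms(1))
  moreover have "card (neighbours V E x \<union> neighbours V E y) \<le> card V"
    using assms(1) by (intro card_mono) (auto simp: neighbours_def)
  moreover have "codegree V E x y < \<tau>" using assms(2) by (simp add: light_edge_def)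
  ultimately show ?thesis using le_deg[of x] le_deg[of y] by linarith
qed

lemma light_edge_sym: "light_edge V E \<tau> u v \<Longrightarrow> light_edge V E \<tau> v u"
  by (auto simp: light_edge_def codegree_def insert_commute Int_commute)

lemma path_lists_subset_light_walks_or_heavy:
  assumes "l \<ge> 1"
  shows "path_lists V E l \<subseteq> walks V (light_edge V E \<tau>) (l - 1)
    \<union> (\<Union>i<l - 1. {xs. length xs = l \<and> set xs \<subseteq> V \<and> (xs ! i, xs ! Suc i) \<in> heavy_edges V E \<tau>})"
proof
  fix xs assume xs: "xs \<in> path_lists V E l"
  then have len: "length xs = l" and "set xs \<subseteq> V" and chain: "edge_chain E xs"
    by (auto simp: path_lists_def)
  have in_V: "xs ! i \<in> V" if "i < l" for i using \<open>set xs \<subseteq> V\<close> len that nth_mem by blast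
  show "xs \<in> walks V (light_edge V E \<tau>) (l - 1) \<union> (\<Union>i<l - 1.
      {xs. length xs = l \<and> set xs \<subseteq> V \<and> (xs ! i, xs ! Suc i) \<in> heavy_edges V E \<tau>})"
  proof (cases "\<exists>i<l - 1. (xs ! i, xs ! Suc i) \<in> heavy_edges V E \<tau>")
    case False
    have "light_edge V E \<tau> (xs ! i) (xs ! Suc i)" if "i < l - 1" for i
    proof -
      have "{xs ! i, xs ! Suc i} \<in> E" using chain that len by (simp add: edge_chain_def)
      moreover have "xs ! i \<in> V" "xs ! Suc i \<in> V" using in_V that by auto
      ultimately show ?thesis using False that
        by (auto simp: light_edge_def heavy_edges_def neighbours_def not_le)
    qed
    then have "xs \<in> walks V (light_edge V E \<tau>) (l - 1)"
      using len \<open>set xs \<subseteq> V\<close> assms by (simp add: walks_def)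
    then show ?thesis ..
  qed (use len \<open>set xs \<subseteq> V\<close> in auto)
qed

lemma card_walks_light_edge_le:
  fixes \<tau> :: real
  assumes "finite V" "\<tau> \<ge> 0"
  shows "real (card (walks V (light_edge V E \<tau>) m))
    \<le> real (card V) * ((real (card V) + \<tau>) / 2) ^ m"
proof (rule card_walks_le[OF assms(1)])
  show "light_edge V E \<tau> y x" if "light_edge V E \<tau> x y" for x y
    using that by (rule light_edge_sym)
  show "y \<in> V" if "light_edge V E \<tau> x y" for x y using that by (simp add: light_edge_def)
qed (use rel_degree_light_edge_sum_le[OF assms(1)] assms(2) in auto)

lemma card_lists_through_heavy_edge_le:
  fixes \<tau> :: real
  assumes "simple_graph V E" "k \<ge> 1"
    and "H_free (fst (cycle_graph (2 * k + 1))) (snd (cycle_graph (2 * k + 1))) V E"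
    and "\<tau> > 0" "Suc i < l"
  shows "real (card {xs. length xs = l \<and> set xs \<subseteq> V \<and> (xs ! i, xs ! Suc i) \<in> heavy_edges V E \<tau>})
    \<le> 2 * (2 * real k - 1) * real (card V) ^ 2 / \<tau> * real (card V) ^ (l - 2)"
proof -
  let ?H = "heavy_edges V E \<tau>"
  have "finite V" using assms(1) by (simp add: simple_graph_def)
  have "?H \<inter> V \<times> V = ?H" by (auto simp: heavy_edges_def neighbours_def)
  then have "card {xs. length xs = l \<and> set xs \<subseteq> V \<and> (xs ! i, xs ! Suc i) \<in> ?H}
      \<le> card ?H * card V ^ (l - 2)"
    using card_lists_with_pair_at_le[OF \<open>finite V\<close> assms(5), of ?H] by simp
  then have "real (card {xs. length xs = l \<and> set xs \<subseteq> V \<and> (xs ! i, xs ! Suc i) \<in> ?H})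
      \<le> real (card ?H) * real (card V) ^ (l - 2)"
    using of_nat_le_iff[THEN iffD2] by fastforce
  also have "\<dots> \<le> 2 * (2 * real k - 1) * real (card V) ^ 2 / \<tau> * real (card V) ^ (l - 2)"
    using card_heavy_edges_le[OF assms(1-3)] assms(4) by (intro mult_right_mono) (simp_all add: le_divide_eq)
  finally show ?thesis .
qed

lemma card_path_lists_le_if_odd_cycle_free:
  fixes \<tau> :: real
  assumes "simple_graph V E" "k \<ge> 1"
    and "H_free (fst (cycle_graph (2 * k + 1))) (snd (cycle_graph (2 * k + 1))) V E"
    and "l \<ge> 2" "\<tau> > 0"
  shows "real (card (path_lists V E l)) \<le> real (card V) * ((real (card V) + \<tau>) / 2) ^ (l - 1)
    + real (l - 1) * (2 * (2 * real k - 1) * real (card V) ^ 2 / \<tau>) * real (card V) ^ (l - 2)"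
proof -
  let ?W = "walks V (light_edge V E \<tau>) (l - 1)"
  let ?B = "\<lambda>i. {xs. length xs = l \<and> set xs \<subseteq> V \<and> (xs ! i, xs ! Suc i) \<in> heavy_edges V E \<tau>}"
  have "finite V" using assms(1) by (simp add: simple_graph_def)
  have "finite (?B i)" for i
    by (rule finite_subset[OF _ finite_lists_length_eq[OF \<open>finite V\<close>, of l]]) auto
  have "card (path_lists V E l) \<le> card (?W \<union> (\<Union>i<l - 1. ?B i))"
    using path_lists_subset_light_walks_or_heavy[of l V E \<tau>] assms(4) \<open>finite (?B _)\<close>
      finite_walks[OF \<open>finite V\<close>] by (intro card_mono) auto
  also have "\<dots> \<le> card ?W + card (\<Union>i<l - 1. ?B i)"
    by (rule card_Un_le)
  also have "\<dots> \<le> card ?W + (\<Sum>i<l - 1. card (?B i))"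
    using card_UN_le[of "{..<l - 1}" ?B] by simp
  finally have "real (card (path_lists V E l)) \<le> card ?W + (\<Sum>i<l - 1. real (card (?B i)))"
    using of_nat_le_iff[THEN iffD2] by fastforce
  also have "\<dots> \<le> real (card V) * ((real (card V) + \<tau>) / 2) ^ (l - 1)
      + (\<Sum>i<l - 1. 2 * (2 * real k - 1) * real (card V) ^ 2 / \<tau> * real (card V) ^ (l - 2))"
    using card_walks_light_edge_le[OF \<open>finite V\<close>] card_lists_through_heavy_edge_le[OF assms(1-3,5)]
      assms(5) by (intro add_mono sum_mono) auto
  finally show ?thesis by (simp add: mult.assoc)
qed

section \<open>Bounds on \<open>ex(n, P\<^sub>l, C\<^bsub>2k+1\<^esub>)\<close>\<close>

lemma finite_gen_ex_candidates:
  fixes n :: nat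
  shows "finite {count_copies VH EH {0..<n} E | E. simple_graph {0..<n} E \<and> H_free VF EF {0..<n} E}"
proof -
  have "{E. simple_graph {0..<n} E} \<subseteq> Pow (Pow {0..<n})" by (auto simp: simple_graph_def)
  then have "finite {E. simple_graph {0..<n} E}" by (rule finite_subset) simp
  then show ?thesis by (rule finite_subset[rotated, OF finite_imageI]) auto
qed

lemma count_copies_le_gen_ex:
  assumes "simple_graph {0..<n} E" "H_free (fst F) (snd F) {0..<n} E"
  shows "count_copies (fst H) (snd H) {0..<n} E \<le> gen_ex n H F"
  unfolding gen_ex_def using assms by (intro Max_ge finite_gen_ex_candidates) auto

lemma gen_ex_attained:
  assumes "simple_graph {0..<n} E" "H_free (fst F) (snd F) {0..<n} E"
  obtains E' where "simple_graph {0..<n} E'" "H_free (fst F) (snd F) {0..<n} E'"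
    "gen_ex n H F = count_copies (fst H) (snd H) {0..<n} E'"
proof -
  have "gen_ex n H F \<in> {count_copies (fst H) (snd H) {0..<n} E | E.
      simple_graph {0..<n} E \<and> H_free (fst F) (snd F) {0..<n} E}"
    unfolding gen_ex_def using assms by (intro Max_in finite_gen_ex_candidates) auto
  then show ?thesis using that by auto
qed

lemma power_mult_power_diff_Suc:
  fixes x a :: "'a :: comm_monoid_mult"
  assumes "l \<ge> 1"
  shows "x ^ l * a ^ (l - 1) = x * (x * a) ^ (l - 1)"
  using assms by (cases l) (simp_all add: power_mult_distrib mult.assoc)

lemma gen_ex_path_odd_cycle_ge:
  assumes "odd L" "l \<ge> 2" "2 * l + 1 \<le> n"
  shows "(real n / 2) ^ l * (1 - (2 * real l + 1) / real n) ^ (l - 1)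
    \<le> gen_ex n (path_graph l) (cycle_graph L)"
proof -
  let ?E = "parity_edges n"
  have "real n / 2 * (1 - (2 * real l + 1) / real n) = (real n - 1) / 2 - real l"
    using assms(3) by (simp add: field_simps)
  also have "\<dots> \<le> real (n div 2 - l)" using assms(3) by (simp add: of_nat_diff)
  finally have base: "real n / 2 * (1 - (2 * real l + 1) / real n) \<le> real (n div 2 - l)" .
  have "0 \<le> 1 - (2 * real l + 1) / real n" using assms(3) by (simp add: field_simps)
  have "(real n / 2) ^ l * (1 - (2 * real l + 1) / real n) ^ (l - 1)
      = real n / 2 * (real n / 2 * (1 - (2 * real l + 1) / real n)) ^ (l - 1)"
    using assms(2) by (intro power_mult_power_diff_Suc) simp
  also have "\<dots> \<le> real n / 2 * real (n div 2 - l) ^ (l - 1)"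
    using base \<open>0 \<le> 1 - _\<close> by (intro mult_left_mono power_mono) auto
  also have "\<dots> \<le> real (card (path_lists {0..<n} ?E l)) / 2"
  proof -
    have "n * (n div 2 - l) ^ (l - 1) \<le> card (path_lists {0..<n} ?E l)"
      using card_path_lists_ge[where l = l, OF finite_atLeastLessThan[of 0 n]
          card_neighbours_parity_edges_ge] assms(2) by simp
    then have "real n * real (n div 2 - l) ^ (l - 1) \<le> real (card (path_lists {0..<n} ?E l))"
      using of_nat_le_iff[THEN iffD2] by fastforce
    then show ?thesis by simp
  qed
  also have "\<dots> = count_copies (fst (path_graph l)) (snd (path_graph l)) {0..<n} ?E"
    using card_path_lists_eq_twice_count_copies[OF simple_graph_parity_edges assms(2)] by simp
  also have "\<dots> \<le> gen_ex n (path_graph l) (cycle_graph L)"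
    using count_copies_le_gen_ex[OF simple_graph_parity_edges parity_edges_odd_cycle_free[OF assms(1)]]
    by simp
  finally show ?thesis .
qed

lemma path_bound_eq_half_power_mult:
  fixes n c :: real
  assumes "n > 0" "l \<ge> 2"
  shows "(n * ((n + sqrt n) / 2) ^ (l - 1) + real (l - 1) * (2 * c * n ^ 2 / sqrt n) * n ^ (l - 2)) / 2
    = (n / 2) ^ l * ((1 + 1 / sqrt n) ^ (l - 1) + real (l - 1) * c * 2 ^ l / sqrt n)"
proof -
  define x where "x = n / 2"
  have "sqrt n > 0" using assms(1) by simp
  have half_sum: "(n + sqrt n) / 2 = x * (1 + 1 / sqrt n)"
    using \<open>sqrt n > 0\<close> by (simp add: x_def field_simps)
  have "n * ((n + sqrt n) / 2) ^ (l - 1) / 2 = x * (x * (1 + 1 / sqrt n)) ^ (l - 1)"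
    unfolding half_sum by (simp add: x_def)
  also have "\<dots> = x ^ l * (1 + 1 / sqrt n) ^ (l - 1)"
    using assms(2) by (intro power_mult_power_diff_Suc[symmetric]) simp
  finally have first: "n * ((n + sqrt n) / 2) ^ (l - 1) / 2 = x ^ l * (1 + 1 / sqrt n) ^ (l - 1)" .
  obtain m where "l = m + 2" using assms(2) by (metis add.commute le_add_diff_inverse)
  then have "n ^ 2 * n ^ (l - 2) = 2 ^ l * x ^ l"
    by (simp add: x_def power_add power2_eq_square power_mult_distrib[symmetric])
  moreover have "real (l - 1) * (2 * c * n ^ 2 / sqrt n) * n ^ (l - 2) / 2
      = real (l - 1) * c * (n ^ 2 * n ^ (l - 2)) / sqrt n"
    using \<open>sqrt n > 0\<close> by (simp add: field_simps)
  ultimately have second: "real (l - 1) * (2 * c * n ^ 2 / sqrt n) * n ^ (l - 2) / 2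
      = x ^ l * (real (l - 1) * c * 2 ^ l / sqrt n)"
    by simp
  have "(n * ((n + sqrt n) / 2) ^ (l - 1) + real (l - 1) * (2 * c * n ^ 2 / sqrt n) * n ^ (l - 2)) / 2
      = n * ((n + sqrt n) / 2) ^ (l - 1) / 2 + real (l - 1) * (2 * c * n ^ 2 / sqrt n) * n ^ (l - 2) / 2"
    by (rule add_divide_distrib)
  also have "\<dots> = x ^ l * (1 + 1 / sqrt n) ^ (l - 1) + x ^ l * (real (l - 1) * c * 2 ^ l / sqrt n)"
    unfolding first second ..
  finally show ?thesis by (simp add: x_def distrib_left)
qed

lemma gen_ex_path_odd_cycle_le:
  assumes "k \<ge> 1" "l \<ge> 2" "n \<ge> 1"
  shows "gen_ex n (path_graph l) (cycle_graph (2 * k + 1))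
    \<le> (real n / 2) ^ l * ((1 + 1 / sqrt (real n)) ^ (l - 1)
        + real (l - 1) * (2 * real k - 1) * 2 ^ l / sqrt (real n))"
proof -
  let ?C = "cycle_graph (2 * k + 1)"
  obtain E where E: "simple_graph {0..<n} E" "H_free (fst ?C) (snd ?C) {0..<n} E"
    and gen_ex_eq: "gen_ex n (path_graph l) ?C
      = count_copies (fst (path_graph l)) (snd (path_graph l)) {0..<n} E"
    using gen_ex_attained[OF simple_graph_parity_edges[of n] parity_edges_odd_cycle_free,
        of "2 * k + 1" "path_graph l"] by auto
  have "sqrt (real n) > 0" using assms(3) by simp
  have "real (gen_ex n (path_graph l) ?C) = real (card (path_lists {0..<n} E l)) / 2"
    using gen_ex_eq card_path_lists_eq_twice_count_copies[OF E(1) assms(2)] by simp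
  also have "\<dots> \<le> (real n * ((real n + sqrt (real n)) / 2) ^ (l - 1)
      + real (l - 1) * (2 * (2 * real k - 1) * real n ^ 2 / sqrt (real n)) * real n ^ (l - 2)) / 2"
    using card_path_lists_le_if_odd_cycle_free[OF E(1) assms(1) E(2) assms(2) \<open>sqrt (real n) > 0\<close>]
    by (intro divide_right_mono) auto
  also have "\<dots> = (real n / 2) ^ l * ((1 + 1 / sqrt (real n)) ^ (l - 1)
      + real (l - 1) * (2 * real k - 1) * 2 ^ l / sqrt (real n))"
    using assms by (intro path_bound_eq_half_power_mult) auto
  finally show ?thesis .
qed

lemma asymp_equiv_sandwich:
  fixes f g lower upper :: "'a \<Rightarrow> real"
  assumes "eventually (\<lambda>x. 0 < g x \<and> lower x * g x \<le> f x \<and> f x \<le> upper x * g x) F"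
    and "(lower \<longlongrightarrow> 1) F" "(upper \<longlongrightarrow> 1) F"
  shows "f \<sim>[F] g"
proof (rule asymp_equivI')
  have "eventually (\<lambda>x. lower x \<le> f x / g x) F" "eventually (\<lambda>x. f x / g x \<le> upper x) F"
    using assms(1) by (auto elim!: eventually_mono simp: pos_le_divide_eq pos_divide_le_eq)
  then show "((\<lambda>x. f x / g x) \<longlongrightarrow> 1) F" using assms(2,3) by (rule tendsto_sandwich)
qed

lemma lim_one_minus_const_over_n_power: "((\<lambda>n. (1 - c / real n) ^ j) \<longlongrightarrow> 1) sequentially"
  using tendsto_power[OF tendsto_diff[OF tendsto_const lim_const_over_n], of 1 c j] by simp

lemma lim_const_over_sqrt_n: "((\<lambda>n. a / sqrt (real n)) \<longlongrightarrow> 0) sequentially"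
proof -
  have "((\<lambda>n. a * sqrt (1 / real n)) \<longlongrightarrow> a * sqrt 0) sequentially"
    by (intro tendsto_intros lim_1_over_n)
  then show ?thesis by (simp add: real_sqrt_divide)
qed

lemma lim_one_plus_inverse_sqrt_power_plus:
  "((\<lambda>n. (1 + 1 / sqrt (real n)) ^ j + c / sqrt (real n)) \<longlongrightarrow> 1) sequentially"
proof -
  have "((\<lambda>n. 1 + 1 / sqrt (real n)) \<longlongrightarrow> 1 + 0) sequentially"
    by (rule tendsto_add[OF tendsto_const lim_const_over_sqrt_n])
  then have "((\<lambda>n. (1 + 1 / sqrt (real n)) ^ j + c / sqrt (real n)) \<longlongrightarrow> (1 + 0) ^ j + 0) sequentially"
    by (rule tendsto_add[OF tendsto_power lim_const_over_sqrt_n])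
  then show ?thesis by simp
qed

theorem theorem19:
  fixes k l :: nat
  assumes "k \<ge> 1" and "l \<ge> 2"
  shows "(\<lambda>n. real (gen_ex n (path_graph l) (cycle_graph (2 * k + 1))))
           \<sim>[at_top] (\<lambda>n. (real n / 2) ^ l)"
proof (rule asymp_equiv_sandwich)
  show "((\<lambda>n. (1 - (2 * real l + 1) / real n) ^ (l - 1)) \<longlongrightarrow> 1) at_top"
    by (rule lim_one_minus_const_over_n_power)
  show "((\<lambda>n. (1 + 1 / sqrt (real n)) ^ (l - 1)
      + real (l - 1) * (2 * real k - 1) * 2 ^ l / sqrt (real n)) \<longlongrightarrow> 1) at_top"
    by (rule lim_one_plus_inverse_sqrt_power_plus)
  show "eventually (\<lambda>n. 0 < (real n / 2) ^ l
    \<and> (1 - (2 * real l + 1) / real n) ^ (l - 1) * (real n / 2) ^ l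
        \<le> real (gen_ex n (path_graph l) (cycle_graph (2 * k + 1)))
    \<and> real (gen_ex n (path_graph l) (cycle_graph (2 * k + 1)))
        \<le> ((1 + 1 / sqrt (real n)) ^ (l - 1)
          + real (l - 1) * (2 * real k - 1) * 2 ^ l / sqrt (real n)) * (real n / 2) ^ l) at_top"
    using gen_ex_path_odd_cycle_ge[of "2 * k + 1" l] gen_ex_path_odd_cycle_le[OF assms]
      assms(2) by (intro eventually_at_top_linorderI[of "2 * l + 1"]) (simp add: mult.commute)
qed

end
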